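(* Let $B$ be a board and $S$ a set of sinks such that every region of $B$ contains a sink, and let $T$ be a minimum-weight arborescence (converging to the root $r$) of the extended large tilt graph $\hat G_L(B,S)$. If $T$ contains two distinct inverse edges $(p_1,q)$ and $(p_2,q)$ with common head $q$, then $q$ is a sink.
   Context: Pixels are unit squares indexed by $\mathbb{Z}^2$. A board $B=(V,E)$ is a finite subgraph of the square grid graph on $\mathbb{Z}^2$; regions are its connected components; its boundary consists of pixel sides not shared with a neighbouring pixel joined by an edge of $E$. $S\subseteq V$ are sinks. For a pixel $p$, its row (column) segment is the maximal set of pixels reachable from $p$ using only horizontal (vertical) edges of $E$; $p^\ell,p^r$ are the leftmost/rightmost pixels of its row segment and $p^u,p^d$ the topmost/bottommost pixels of its column segment. The full tilt graph $G_F(B)$ has vertex set $V$ and edges $(p,p^x)$ for $x\in\{\ell,r,u,d\}$, $p^x\ne p$. A corner pixel is a pixel $p$ with $p=p^x=p^y$ for some $x\in\{\ell,r\}$, $y\in\{u,d\}$. The large tilt graph $G_L(B,S)$ is the subgraph of $G_F(B)$ induced by the vertex set consisting of (i) all pixels reachable in $G_F(B)$ from corner pixels, (ii) every sink $s$ and $s^\ell,s^r,s^u,s^d$, (iii) for every reflex corner of the boundary, the endpoints of the row and column segments of the pixels incident to that corner, (iv) all pixels on the intersection of a row segment and a column segment each containing a pixel included in (i)–(iii). Extended graph: for a directed graph $G$ with sinks $S$, $\hat G$ has vertex set $V(G)\cup\{r\}$ with new root $r$ and edges: every edge of $G$ with weight $0$; for every edge $(p,q)$ of $G$ such that $(q,p)$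 is not an edge of $G$, the inverse edge $(q,p)$ with weight $1$; and $(s,r)$ with weight $0$ for each $s\in S$. An arborescence converging to $r$ is a spanning subgraph in which every vertex other than $r$ has exactly one outgoing edge and a directed path to $r$; its weight is the sum of its edge weights. *)

theory Defs
  imports Main
begin

type_synonym pixel = "int \<times> int"

text \<open>Pixel (x,y) is the unit square [x,x+1] x [y,y+1]; "up" means larger y.\<close>

definition grid_adj :: "pixel \<Rightarrow> pixel \<Rightarrow> bool" where
  "grid_adj p q \<longleftrightarrow> \<bar>fst p - fst q\<bar> + \<bar>snd p - snd q\<bar> = 1"

definition board :: "pixel set \<Rightarrow> pixel set set \<Rightarrow> bool" where
  "board V E \<longleftrightarrow> finite V \<and>
     (\<forall>e\<in>E. \<exists>p q. e = {p, q} \<and> p \<in> V \<and> q \<in> V \<and> grid_adj p q)"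

definition edge_rel :: "pixel set set \<Rightarrow> (pixel \<times> pixel) set" where
  "edge_rel E = {(p, q). {p, q} \<in> E \<and> p \<noteq> q}"

definition every_region_has_sink :: "pixel set \<Rightarrow> pixel set set \<Rightarrow> pixel set \<Rightarrow> bool" where
  "every_region_has_sink V E S \<longleftrightarrow> (\<forall>p\<in>V. \<exists>s\<in>S. (p, s) \<in> (edge_rel E)\<^sup>*)"

definition hrel :: "pixel set set \<Rightarrow> (pixel \<times> pixel) set" where
  "hrel E = {(p, q). {p, q} \<in> E \<and> p \<noteq> q \<and> snd p = snd q}"

definition vrel :: "pixel set set \<Rightarrow> (pixel \<times> pixel) set" where
  "vrel E = {(p, q). {p, q} \<in> E \<and> p \<noteq> q \<and> fst p = fst q}"

definition rowseg :: "pixel set set \<Rightarrow> pixel \<Rightarrow> pixel set" where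
  "rowseg E p = {q. (p, q) \<in> (hrel E)\<^sup>*}"

definition colseg :: "pixel set set \<Rightarrow> pixel \<Rightarrow> pixel set" where
  "colseg E p = {q. (p, q) \<in> (vrel E)\<^sup>*}"

definition pl :: "pixel set set \<Rightarrow> pixel \<Rightarrow> pixel" where
  "pl E p = (THE q. q \<in> rowseg E p \<and> (\<forall>q'\<in>rowseg E p. fst q \<le> fst q'))"

definition pr :: "pixel set set \<Rightarrow> pixel \<Rightarrow> pixel" where
  "pr E p = (THE q. q \<in> rowseg E p \<and> (\<forall>q'\<in>rowseg E p. fst q' \<le> fst q))"

definition pu :: "pixel set set \<Rightarrow> pixel \<Rightarrow> pixel" where
  "pu E p = (THE q. q \<in> colseg E p \<and> (\<forall>q'\<in>colseg E p. snd q' \<le> snd q))"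

definition pd :: "pixel set set \<Rightarrow> pixel \<Rightarrow> pixel" where
  "pd E p = (THE q. q \<in> colseg E p \<and> (\<forall>q'\<in>colseg E p. snd q \<le> snd q'))"

definition seg_ends :: "pixel set set \<Rightarrow> pixel \<Rightarrow> pixel set" where
  "seg_ends E p = {pl E p, pr E p, pu E p, pd E p}"

definition full_tilt :: "pixel set \<Rightarrow> pixel set set \<Rightarrow> (pixel \<times> pixel) set" where
  "full_tilt V E = {(p, q). p \<in> V \<and> q \<in> seg_ends E p \<and> q \<noteq> p}"

definition corner_pixel :: "pixel set set \<Rightarrow> pixel \<Rightarrow> bool" where
  "corner_pixel E p \<longleftrightarrow> (p = pl E p \<or> p = pr E p) \<and> (p = pu E p \<or> p = pd E p)"

text \<open>Lattice point c = (i,j) is the common corner of pixels (i-1+dx, j-1+dy), dx,dy in {0,1}.\<close>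
definition quad :: "int \<times> int \<Rightarrow> int \<Rightarrow> int \<Rightarrow> pixel" where
  "quad c dx dy = (fst c - 1 + dx, snd c - 1 + dy)"

definition incident_pixels :: "pixel set \<Rightarrow> int \<times> int \<Rightarrow> pixel set" where
  "incident_pixels V c = {p \<in> V. \<exists>dx\<in>{0,1}. \<exists>dy\<in>{0,1}. p = quad c dx dy}"

text \<open>Reflex corner of the boundary at lattice point c: three of the four pixels around c
  lie in V and are joined around c by two edges (so the two sides between them at c are
  not boundary), while the fourth quadrant e is absent or joined to neither neighbour
  (so the two sides at c bounding e are boundary sides): interior angle 270 degrees.\<close>
definition reflex_corner :: "pixel set \<Rightarrow> pixel set set \<Rightarrow> int \<times> int \<Rightarrow> bool" where
  "reflex_corner V E c \<longleftrightarrow> (\<exists>dx\<in>{0,1}. \<exists>dy\<in>{0,1}.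
     let e = quad c dx dy; b = quad c (1 - dx) (1 - dy);
         a = quad c (1 - dx) dy; d = quad c dx (1 - dy) in
     a \<in> V \<and> b \<in> V \<and> d \<in> V \<and> {a, b} \<in> E \<and> {b, d} \<in> E \<and>
     (e \<notin> V \<or> ({a, e} \<notin> E \<and> {d, e} \<notin> E)))"

definition large_base :: "pixel set \<Rightarrow> pixel set set \<Rightarrow> pixel set \<Rightarrow> pixel set" where
  "large_base V E S =
     {q. \<exists>c\<in>V. corner_pixel E c \<and> (c, q) \<in> (full_tilt V E)\<^sup>*}
     \<union> (\<Union>s\<in>S. insert s (seg_ends E s))
     \<union> (\<Union>c\<in>{c. reflex_corner V E c}. \<Union>p\<in>incident_pixels V c. seg_ends E p)"

definition large_verts :: "pixel set \<Rightarrow> pixel set set \<Rightarrow> pixel set \<Rightarrow> pixel set" where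
  "large_verts V E S = large_base V E S \<union>
     {q. \<exists>a\<in>large_base V E S. \<exists>b\<in>large_base V E S. q \<in> rowseg E a \<inter> colseg E b}"

definition large_tilt :: "pixel set \<Rightarrow> pixel set set \<Rightarrow> pixel set \<Rightarrow> (pixel \<times> pixel) set" where
  "large_tilt V E S = {(p, q) \<in> full_tilt V E. p \<in> large_verts V E S \<and> q \<in> large_verts V E S}"

text \<open>Extended graph: vertices Some v for original vertices, None is the root r.\<close>
definition ext_verts :: "'a set \<Rightarrow> 'a option set" where
  "ext_verts W = insert None (Some ` W)"

definition ext_edges :: "('a \<times> 'a) set \<Rightarrow> 'a set \<Rightarrow> ('a option \<times> 'a option) set" where
  "ext_edges G S = {(Some p, Some q) | p q. (p, q) \<in> G}
     \<union> {(Some q, Some p) | p q. (p, q) \<in> G \<and> (q, p) \<notin> G}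
     \<union> {(Some s, None) | s. s \<in> S}"

definition inverse_edge :: "('a \<times> 'a) set \<Rightarrow> 'a option \<times> 'a option \<Rightarrow> bool" where
  "inverse_edge G e \<longleftrightarrow> (\<exists>p q. e = (Some q, Some p) \<and> (p, q) \<in> G \<and> (q, p) \<notin> G)"

definition ext_weight :: "('a \<times> 'a) set \<Rightarrow> 'a option \<times> 'a option \<Rightarrow> nat" where
  "ext_weight G e = (if inverse_edge G e then 1 else 0)"

definition arborescence :: "'a option set \<Rightarrow> ('a option \<times> 'a option) set \<Rightarrow> ('a option \<times> 'a option) set \<Rightarrow> bool" where
  "arborescence Vx Ed T \<longleftrightarrow> T \<subseteq> Ed \<and>
     (\<forall>v\<in>Vx - {None}. \<exists>!w. (v, w) \<in> T) \<and>
     (\<forall>v\<in>Vx. (v, None) \<in> T\<^sup>*)"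

definition tree_weight :: "('a \<times> 'a) set \<Rightarrow> ('a option \<times> 'a option) set \<Rightarrow> nat" where
  "tree_weight G T = (\<Sum>e\<in>T. ext_weight G e)"

definition min_arborescence :: "('a \<times> 'a) set \<Rightarrow> 'a set \<Rightarrow> 'a set \<Rightarrow> ('a option \<times> 'a option) set \<Rightarrow> bool" where
  "min_arborescence G W S T \<longleftrightarrow>
     arborescence (ext_verts W) (ext_edges G S) T \<and>
     (\<forall>T'. arborescence (ext_verts W) (ext_edges G S) T' \<longrightarrow> tree_weight G T \<le> tree_weight G T')"

end

theory Submission
  imports Defs
begin

(* An inverse edge (a, b) means that b tilts to a while a does not tilt back to b; as a is an
   end of a segment through b, this forces b to lie strictly inside that segment.
   In an arborescence T, replacing an inverse edge (u, v) by a tilt edge (u, w) lowers the weight,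
   and the result is again an arborescence unless w reaches u in T.  So in a minimum arborescence
   every such w reaches u.

   Let (a, b) and (c, b) be inverse edges of T.  If a and c are the two ends of the same segment
   through b, then c tilts to a; but a path from a to c in T starts with the edge (a, b) and
   closes the cycle through (c, b).  Otherwise a ends the row and c the column of b, so b is
   interior to both of its segments and no tilt edge enters b.  If b is not a sink, its edge in T
   is a tilt edge (b, w) along its row or its column, and the end a or c of that same line also
   tilts to w; a path back from w would again close a cycle through b. *)

lemma ext_edges_subset:
  assumes "G \<subseteq> W \<times> W" and "S \<subseteq> W"
  shows "ext_edges G S \<subseteq> (ext_verts W - {None}) \<times> ext_verts W"
  using assms by (auto simp: ext_edges_def ext_verts_def)

lemma finite_ext_edges:
  assumes "finite G" and "finite S"
  shows "finite (ext_edges G S)"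
proof -
  have "ext_edges G S \<subseteq> map_prod Some Some ` G \<union> (\<lambda>(p, q). (Some q, Some p)) ` G
      \<union> (\<lambda>s. (Some s, None)) ` S"
    by (auto simp: ext_edges_def)
  then show ?thesis
    using assms by (meson finite_Un finite_imageI finite_subset)
qed

lemma arborescence_out_unique:
  assumes "arborescence Vx Ed T" and "Ed \<subseteq> (Vx - {None}) \<times> Vx"
    and "(x, y) \<in> T" and "(x, z) \<in> T"
  shows "y = z"
  using assms unfolding arborescence_def by blast

lemma arborescence_trancl_via_out_edge:
  assumes "arborescence Vx Ed T" and "Ed \<subseteq> (Vx - {None}) \<times> Vx"
    and "(x, y) \<in> T" and "(x, z) \<in> T\<^sup>+"
  shows "(y, z) \<in> T\<^sup>*"
proof -
  obtain y' where "(x, y') \<in> T" and "(y', z) \<in> T\<^sup>*"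
    using assms(4) by (meson tranclD)
  then show ?thesis
    using arborescence_out_unique[OF assms(1,2,3)] by blast
qed

lemma arborescence_acyclic:
  assumes A: "arborescence Vx Ed T" and Ed: "Ed \<subseteq> (Vx - {None}) \<times> Vx"
  shows "(x, x) \<notin> T\<^sup>+"
proof
  assume cycle: "(x, x) \<in> T\<^sup>+"
  then obtain y where "(x, y) \<in> T" by (meson tranclD)
  then have "(x, None) \<in> T\<^sup>*"
    using A Ed unfolding arborescence_def by blast
  moreover have "(z, x) \<in> T\<^sup>+" if "(x, z) \<in> T\<^sup>*" for z
    using that
  proof (induction rule: rtrancl_induct)
    case base
    show ?case using cycle .
  next
    case (step z z')
    then have "(z', x) \<in> T\<^sup>*"
      using arborescence_trancl_via_out_edge[OF A Ed] by blast
    then show ?case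
      using cycle by (auto dest: rtranclD)
  qed
  ultimately obtain y where "(None, y) \<in> T"
    by (meson tranclD)
  then show False
    using A Ed unfolding arborescence_def by blast
qed

lemma rtrancl_avoiding_or_reaching:
  assumes "(x, y) \<in> R\<^sup>*"
  shows "(x, y) \<in> {e \<in> R. fst e \<noteq> u}\<^sup>* \<or> (x, u) \<in> {e \<in> R. fst e \<noteq> u}\<^sup>*"
  using assms
proof (induction rule: converse_rtrancl_induct)
  case base
  show ?case by simp
next
  case (step x x')
  then show ?case
    by (cases "x = u") (auto intro: converse_rtrancl_into_rtrancl)
qed

lemma arborescence_redirect:
  assumes A: "arborescence Vx Ed T" and Ed: "Ed \<subseteq> (Vx - {None}) \<times> Vx"
    and uv: "(u, v) \<in> T" and uw: "(u, w) \<in> Ed" and no_cycle: "(w, u) \<notin> T\<^sup>*"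
  shows "arborescence Vx Ed (insert (u, w) (T - {(u, v)}))" (is "arborescence _ _ ?T'")
proof -
  let ?R = "{e \<in> T. fst e \<noteq> u}"
  have R_sub: "?R \<subseteq> ?T'" "?R \<subseteq> T" by auto
  have to_root: "(x, None) \<in> ?T'\<^sup>* \<or> (x, u) \<in> ?T'\<^sup>*" if "x \<in> Vx" for x
    using rtrancl_avoiding_or_reaching[of x None T u] A that rtrancl_mono[OF R_sub(1)]
    unfolding arborescence_def by blast
  have "w \<in> Vx" using uw Ed by blast
  then have "(w, None) \<in> ?T'\<^sup>*"
    using rtrancl_avoiding_or_reaching[of w None T u] A no_cycle rtrancl_mono[OF R_sub(1)] rtrancl_mono[OF R_sub(2)]
    unfolding arborescence_def by blast
  then have "(u, None) \<in> ?T'\<^sup>*"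
    by (blast intro: converse_rtrancl_into_rtrancl)
  then have "\<forall>x\<in>Vx. (x, None) \<in> ?T'\<^sup>*"
    using to_root by (meson rtrancl_trans)
  moreover have "\<exists>!y. (x, y) \<in> ?T'" if "x \<in> Vx - {None}" for x
  proof (cases "x = u")
    case True
    then show ?thesis
      using arborescence_out_unique[OF A Ed uv] by auto
  next
    case False
    then have "(x, y) \<in> ?T' \<longleftrightarrow> (x, y) \<in> T" for y by auto
    then show ?thesis
      using A that unfolding arborescence_def by simp
  qed
  ultimately show ?thesis
    using A uw unfolding arborescence_def by blast
qed

lemma min_arborescence_redirect_closes_cycle:
  assumes M: "min_arborescence G W S T" and GW: "G \<subseteq> W \<times> W" "S \<subseteq> W"
    and fin: "finite G" "finite S"
    and uv: "(Some u, v) \<in> T" and inv: "inverse_edge G (Some u, v)" and uw: "(u, w) \<in> G"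
  shows "(Some w, Some u) \<in> T\<^sup>*"
proof (rule ccontr)
  assume no_cycle: "(Some w, Some u) \<notin> T\<^sup>*"
  let ?T' = "insert (Some u, Some w) (T - {(Some u, v)})"
  note Ed = ext_edges_subset[OF GW]
  have A: "arborescence (ext_verts W) (ext_edges G S) T"
    using M by (simp add: min_arborescence_def)
  have "(Some u, Some w) \<in> ext_edges G S"
    using uw by (auto simp: ext_edges_def)
  then have "arborescence (ext_verts W) (ext_edges G S) ?T'"
    using arborescence_redirect[OF A Ed uv _ no_cycle] by blast
  then have le: "tree_weight G T \<le> tree_weight G ?T'"
    using M by (simp add: min_arborescence_def)
  have "finite T"
    using A finite_ext_edges[OF fin] unfolding arborescence_def by (meson finite_subset)
  moreover have weight_drop: "ext_weight G (Some u, Some w) = 0" "ext_weight G (Some u, v) = 1"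
    using uw inv by (auto simp: ext_weight_def inverse_edge_def)
  moreover have "(Some u, Some w) \<notin> T - {(Some u, v)}"
    using arborescence_out_unique[OF A Ed uv] by blast
  ultimately have "tree_weight G ?T' + 1 = tree_weight G T"
    using uv by (simp add: tree_weight_def sum.remove)
  with le show False by simp
qed

lemma min_arborescence_no_inverse_sibling:
  assumes M: "min_arborescence G W S T" and GW: "G \<subseteq> W \<times> W" "S \<subseteq> W"
    and fin: "finite G" "finite S"
    and ab: "(Some a, Some b) \<in> T" and cb: "(Some c, Some b) \<in> T"
    and inv: "inverse_edge G (Some c, Some b)" and "a \<noteq> c"
  shows "(c, a) \<notin> G"
proof
  assume "(c, a) \<in> G"
  note A = M[unfolded min_arborescence_def, THEN conjunct1] and Ed = ext_edges_subset[OF GW]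
  have "(Some a, Some c) \<in> T\<^sup>+"
    using min_arborescence_redirect_closes_cycle[OF M GW fin cb inv \<open>(c, a) \<in> G\<close>] \<open>a \<noteq> c\<close>
    by (auto dest: rtranclD)
  then have "(Some b, Some b) \<in> T\<^sup>+"
    using arborescence_trancl_via_out_edge[OF A Ed ab] cb by (meson rtrancl_into_trancl1)
  then show False
    using arborescence_acyclic[OF A Ed] by blast
qed

lemma min_arborescence_no_inverse_shortcut:
  assumes M: "min_arborescence G W S T" and GW: "G \<subseteq> W \<times> W" "S \<subseteq> W"
    and fin: "finite G" "finite S"
    and ab: "(Some a, Some b) \<in> T" and inv: "inverse_edge G (Some a, Some b)"
    and bw: "(Some b, Some w) \<in> T"
  shows "(a, w) \<notin> G"
proof
  assume "(a, w) \<in> G"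
  with min_arborescence_redirect_closes_cycle[OF M GW fin ab inv]
  have "(Some b, Some b) \<in> T\<^sup>+"
    using ab bw by (meson rtrancl_into_trancl1 trancl_into_trancl2)
  then show False
    using arborescence_acyclic[OF M[unfolded min_arborescence_def, THEN conjunct1]
        ext_edges_subset[OF GW]] by blast
qed

lemma ex1_least_injective:
  fixes g :: "'a \<Rightarrow> 'b::linorder"
  assumes "finite A" and "A \<noteq> {}" and "inj_on g A"
  shows "\<exists>!q. q \<in> A \<and> (\<forall>q'\<in>A. g q \<le> g q')"
proof -
  have "Min (g ` A) \<in> g ` A"
    using assms(1,2) by simp
  then obtain m where "m \<in> A" and "g m = Min (g ` A)" by auto
  then show ?thesis
    using assms by (metis Min_le finite_imageI image_eqI inj_onD order_antisym)
qed

lemma ex1_greatest_injective: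
  fixes g :: "'a \<Rightarrow> 'b::linorder"
  assumes "finite A" and "A \<noteq> {}" and "inj_on g A"
  shows "\<exists>!q. q \<in> A \<and> (\<forall>q'\<in>A. g q' \<le> g q)"
proof -
  have "Max (g ` A) \<in> g ` A"
    using assms(1,2) by simp
  then obtain m where "m \<in> A" and "g m = Max (g ` A)" by auto
  then show ?thesis
    using assms by (metis Max_ge finite_imageI image_eqI inj_onD order_antisym)
qed

lemma sym_hrel: "sym (hrel E)"
  by (auto simp: sym_def hrel_def insert_commute)

lemma sym_vrel: "sym (vrel E)"
  by (auto simp: sym_def vrel_def insert_commute)

lemma rowseg_eq:
  assumes "q \<in> rowseg E p"
  shows "rowseg E q = rowseg E p"
proof -
  have "(p, q) \<in> (hrel E)\<^sup>*" and "(q, p) \<in> (hrel E)\<^sup>*"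
    using assms symD[OF sym_rtrancl[OF sym_hrel]] by (auto simp: rowseg_def)
  then show ?thesis
    unfolding rowseg_def by (auto intro: rtrancl_trans)
qed

lemma colseg_eq:
  assumes "q \<in> colseg E p"
  shows "colseg E q = colseg E p"
proof -
  have "(p, q) \<in> (vrel E)\<^sup>*" and "(q, p) \<in> (vrel E)\<^sup>*"
    using assms symD[OF sym_rtrancl[OF sym_vrel]] by (auto simp: colseg_def)
  then show ?thesis
    unfolding colseg_def by (auto intro: rtrancl_trans)
qed

lemma inj_on_fst_rowseg: "inj_on fst (rowseg E p)"
proof -
  have "snd q = snd p" if "q \<in> rowseg E p" for q
    using that unfolding rowseg_def mem_Collect_eq
    by (induction rule: rtrancl_induct) (auto simp: hrel_def)
  then show ?thesis
    by (intro inj_onI) (metis prod_eq_iff)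
qed

lemma inj_on_snd_colseg: "inj_on snd (colseg E p)"
proof -
  have "fst q = fst p" if "q \<in> colseg E p" for q
    using that unfolding colseg_def mem_Collect_eq
    by (induction rule: rtrancl_induct) (auto simp: vrel_def)
  then show ?thesis
    by (intro inj_onI) (metis prod_eq_iff)
qed

lemma board_edge_in_verts: "board V E \<Longrightarrow> {p, q} \<in> E \<Longrightarrow> q \<in> V"
  unfolding board_def by (metis doubleton_eq_iff)

lemma rowseg_subset:
  assumes "board V E"
  shows "rowseg E p \<subseteq> insert p V"
proof
  fix q
  assume "q \<in> rowseg E p"
  then have "(p, q) \<in> (hrel E)\<^sup>*" by (simp add: rowseg_def)
  then show "q \<in> insert p V"
    by (induction rule: rtrancl_induct) (auto simp: hrel_def intro: board_edge_in_verts[OF assms])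
qed

lemma colseg_subset:
  assumes "board V E"
  shows "colseg E p \<subseteq> insert p V"
proof
  fix q
  assume "q \<in> colseg E p"
  then have "(p, q) \<in> (vrel E)\<^sup>*" by (simp add: colseg_def)
  then show "q \<in> insert p V"
    by (induction rule: rtrancl_induct) (auto simp: vrel_def intro: board_edge_in_verts[OF assms])
qed

lemma row_ends_in_rowseg:
  assumes "board V E"
  shows "pl E p \<in> rowseg E p" and "pr E p \<in> rowseg E p"
proof -
  have fin: "finite (rowseg E p)"
    using rowseg_subset[OF assms] assms by (meson board_def finite_insert finite_subset)
  have ne: "rowseg E p \<noteq> {}"
    unfolding rowseg_def by blast
  show "pl E p \<in> rowseg E p"
    unfolding pl_def using theI'[OF ex1_least_injective[OF fin ne inj_on_fst_rowseg]] by blast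
  show "pr E p \<in> rowseg E p"
    unfolding pr_def using theI'[OF ex1_greatest_injective[OF fin ne inj_on_fst_rowseg]] by blast
qed

lemma col_ends_in_colseg:
  assumes "board V E"
  shows "pu E p \<in> colseg E p" and "pd E p \<in> colseg E p"
proof -
  have fin: "finite (colseg E p)"
    using colseg_subset[OF assms] assms by (meson board_def finite_insert finite_subset)
  have ne: "colseg E p \<noteq> {}"
    unfolding colseg_def by blast
  show "pu E p \<in> colseg E p"
    unfolding pu_def using theI'[OF ex1_greatest_injective[OF fin ne inj_on_snd_colseg]] by blast
  show "pd E p \<in> colseg E p"
    unfolding pd_def using theI'[OF ex1_least_injective[OF fin ne inj_on_snd_colseg]] by blast
qed

lemma row_ends_of_row_end:
  assumes "board V E" and "x \<in> {pl E p, pr E p}"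
  shows "pl E x = pl E p" and "pr E x = pr E p"
proof -
  have "rowseg E x = rowseg E p"
    using assms row_ends_in_rowseg rowseg_eq by blast
  then show "pl E x = pl E p" and "pr E x = pr E p"
    by (simp_all add: pl_def pr_def)
qed

lemma col_ends_of_col_end:
  assumes "board V E" and "x \<in> {pu E p, pd E p}"
  shows "pu E x = pu E p" and "pd E x = pd E p"
proof -
  have "colseg E x = colseg E p"
    using assms col_ends_in_colseg colseg_eq by blast
  then show "pu E x = pu E p" and "pd E x = pd E p"
    by (simp_all add: pu_def pd_def)
qed

lemma seg_ends_subset:
  assumes "board V E" and "p \<in> V"
  shows "seg_ends E p \<subseteq> V"
  using row_ends_in_rowseg[OF assms(1), of p] col_ends_in_colseg[OF assms(1), of p]
    rowseg_subset[OF assms(1), of p] colseg_subset[OF assms(1), of p] assms(2)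
  by (auto simp: seg_ends_def)

definition row_interior :: "pixel set set \<Rightarrow> pixel \<Rightarrow> bool" where
  "row_interior E p \<longleftrightarrow> p \<notin> {pl E p, pr E p}"

definition col_interior :: "pixel set set \<Rightarrow> pixel \<Rightarrow> bool" where
  "col_interior E p \<longleftrightarrow> p \<notin> {pu E p, pd E p}"

lemma seg_end_one_way_cases:
  assumes "board V E" and "a \<in> seg_ends E b" and "b \<notin> seg_ends E a"
  shows "(a \<in> {pl E b, pr E b} \<and> row_interior E b) \<or> (a \<in> {pu E b, pd E b} \<and> col_interior E b)"
proof (cases "a \<in> {pl E b, pr E b}")
  case True
  then have "row_interior E b"
    using row_ends_of_row_end[OF assms(1) True] assms(3)
    by (auto simp: seg_ends_def row_interior_def)
  with True show ?thesis by blast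
next
  case False
  then have col_end: "a \<in> {pu E b, pd E b}"
    using assms(2) by (auto simp: seg_ends_def)
  then have "col_interior E b"
    using col_ends_of_col_end[OF assms(1) col_end] assms(3)
    by (auto simp: seg_ends_def col_interior_def)
  with col_end show ?thesis by blast
qed

lemma row_ends_full_tilt:
  assumes "board V E" and "p \<in> V"
    and "x \<in> {pl E p, pr E p}" and "y \<in> {pl E p, pr E p}" and "x \<noteq> y"
  shows "(x, y) \<in> full_tilt V E"
  using seg_ends_subset[OF assms(1,2)] row_ends_of_row_end[OF assms(1,3)] assms(3-5)
  by (auto simp: full_tilt_def seg_ends_def)

lemma col_ends_full_tilt:
  assumes "board V E" and "p \<in> V"
    and "x \<in> {pu E p, pd E p}" and "y \<in> {pu E p, pd E p}" and "x \<noteq> y"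
  shows "(x, y) \<in> full_tilt V E"
  using seg_ends_subset[OF assms(1,2)] col_ends_of_col_end[OF assms(1,3)] assms(3-5)
  by (auto simp: full_tilt_def seg_ends_def)

lemma interior_not_seg_end:
  assumes "board V E" and "row_interior E p" and "col_interior E p"
  shows "p \<notin> seg_ends E w"
  using row_ends_of_row_end[OF assms(1), of p w] col_ends_of_col_end[OF assms(1), of p w] assms(2,3)
  by (auto simp: seg_ends_def row_interior_def col_interior_def)

lemma large_tilt_subset: "large_tilt V E S \<subseteq> large_verts V E S \<times> large_verts V E S"
  by (auto simp: large_tilt_def)

lemma sinks_subset_large_verts: "S \<subseteq> large_verts V E S"
  by (auto simp: large_verts_def large_base_def)

lemma finite_large_tilt:
  assumes "board V E"
  shows "finite (large_tilt V E S)"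
proof -
  have "large_tilt V E S \<subseteq> Sigma V (seg_ends E)"
    by (auto simp: large_tilt_def full_tilt_def)
  moreover have "finite (Sigma V (seg_ends E))"
    using assms by (auto simp: board_def seg_ends_def)
  ultimately show ?thesis
    by (rule finite_subset)
qed

lemma large_tilt_inverse_edge_cases:
  assumes B: "board V E" and inv: "inverse_edge (large_tilt V E S) (Some a, Some b)"
  shows "(a \<in> {pl E b, pr E b} \<and> row_interior E b) \<or> (a \<in> {pu E b, pd E b} \<and> col_interior E b)"
proof -
  have ba: "(b, a) \<in> full_tilt V E" and "(a, b) \<notin> full_tilt V E"
    using inv by (auto simp: inverse_edge_def large_tilt_def)
  moreover have "a \<in> V"
    using ba seg_ends_subset[OF B, of b] by (auto simp: full_tilt_def)
  ultimately have "a \<in> seg_ends E b" and "b \<notin> seg_ends E a"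
    by (auto simp: full_tilt_def)
  then show ?thesis
    by (rule seg_end_one_way_cases[OF B])
qed

lemma large_tilt_inverse_pair_cases:
  assumes B: "board V E"
    and ab: "inverse_edge (large_tilt V E S) (Some a, Some b)"
    and cb: "inverse_edge (large_tilt V E S) (Some c, Some b)" and "a \<noteq> c"
  shows "(c, a) \<in> large_tilt V E S \<or> (row_interior E b \<and> col_interior E b \<and>
    (a \<in> {pl E b, pr E b} \<and> c \<in> {pu E b, pd E b} \<or> a \<in> {pu E b, pd E b} \<and> c \<in> {pl E b, pr E b}))"
proof -
  have verts: "a \<in> large_verts V E S" "c \<in> large_verts V E S" "b \<in> V"
    using ab cb by (auto simp: inverse_edge_def large_tilt_def full_tilt_def)
  have "(c, a) \<in> full_tilt V E" if "a \<in> {pl E b, pr E b} \<and> c \<in> {pl E b, pr E b} \<or>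
      a \<in> {pu E b, pd E b} \<and> c \<in> {pu E b, pd E b}"
    using that row_ends_full_tilt[OF B verts(3)] col_ends_full_tilt[OF B verts(3)] \<open>a \<noteq> c\<close>
    by metis
  then show ?thesis
    using large_tilt_inverse_edge_cases[OF B ab] large_tilt_inverse_edge_cases[OF B cb] verts
    unfolding large_tilt_def by blast
qed

lemma large_tilt_inverse_row_and_col_ends_sink:
  assumes B: "board V E" and SV: "S \<subseteq> V"
    and M: "min_arborescence (large_tilt V E S) (large_verts V E S) S T"
    and a: "a \<in> {pl E b, pr E b}" and c: "c \<in> {pu E b, pd E b}"
    and interior: "row_interior E b" "col_interior E b"
    and ab: "(Some a, Some b) \<in> T" "inverse_edge (large_tilt V E S) (Some a, Some b)"
    and cb: "(Some c, Some b) \<in> T" "inverse_edge (large_tilt V E S) (Some c, Some b)"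
  shows "b \<in> S"
proof (rule ccontr)
  assume "b \<notin> S"
  let ?G = "large_tilt V E S" and ?W = "large_verts V E S"
  note GW = large_tilt_subset[of V E S] sinks_subset_large_verts[of S V E]
  have fin: "finite ?G" "finite S"
    using finite_large_tilt[OF B] B SV by (auto simp: board_def intro: finite_subset)
  have A: "arborescence (ext_verts ?W) (ext_edges ?G S) T"
    using M by (simp add: min_arborescence_def)
  have verts: "a \<in> ?W" "b \<in> ?W" "c \<in> ?W" "b \<in> V"
    using ab(2) cb(2) by (auto simp: inverse_edge_def large_tilt_def full_tilt_def)
  then obtain w where bw: "(Some b, w) \<in> T"
    using A unfolding arborescence_def ext_verts_def by blast
  have no_edge_into_b: "(x, b) \<notin> ?G" for x
    using interior_not_seg_end[OF B interior] by (auto simp: large_tilt_def full_tilt_def)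
  obtain w0 where w: "w = Some w0" and bw0: "(b, w0) \<in> ?G"
    using bw A \<open>b \<notin> S\<close> no_edge_into_b by (auto simp: arborescence_def ext_edges_def)
  have w0: "w0 \<in> seg_ends E b" "w0 \<in> ?W"
    using bw0 by (auto simp: large_tilt_def full_tilt_def)
  have "w0 \<noteq> a" and "w0 \<noteq> c"
    using arborescence_acyclic[OF A ext_edges_subset[OF GW]] ab(1) cb(1) bw w
    by (metis r_into_trancl trancl_into_trancl2)+
  from w0(1) consider "w0 \<in> {pl E b, pr E b}" | "w0 \<in> {pu E b, pd E b}"
    unfolding seg_ends_def by blast
  then show False
  proof cases
    case 1
    then have "(a, w0) \<in> ?G"
      using row_ends_full_tilt[OF B verts(4) a 1] \<open>w0 \<noteq> a\<close> verts w0 by (simp add: large_tilt_def)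
    then show False
      using min_arborescence_no_inverse_shortcut[OF M GW fin ab] bw w by blast
  next
    case 2
    then have "(c, w0) \<in> ?G"
      using col_ends_full_tilt[OF B verts(4) c 2] \<open>w0 \<noteq> c\<close> verts w0 by (simp add: large_tilt_def)
    then show False
      using min_arborescence_no_inverse_shortcut[OF M GW fin cb] bw w by blast
  qed
qed

theorem mainTheorem7:
  fixes V :: "pixel set" and E :: "pixel set set" and S :: "pixel set"
    and T :: "(pixel option \<times> pixel option) set"
    and p1 p2 q :: "pixel option"
  assumes "board V E"
    and "S \<subseteq> V"
    and "every_region_has_sink V E S"
    and "min_arborescence (large_tilt V E S) (large_verts V E S) S T"
    and "(p1, q) \<in> T" and "(p2, q) \<in> T" and "p1 \<noteq> p2"
    and "inverse_edge (large_tilt V E S) (p1, q)"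
    and "inverse_edge (large_tilt V E S) (p2, q)"
  shows "q \<in> Some ` S"
proof -
  \<comment> \<open>The hypothesis that every region has a sink only makes arborescences exist.\<close>
  note B = assms(1) and SV = assms(2) and M = assms(4)
  let ?G = "large_tilt V E S"
  obtain a b c where p: "p1 = Some a" "q = Some b" "p2 = Some c"
    using assms(8,9) unfolding inverse_edge_def by blast
  with assms(7) have "a \<noteq> c" by blast
  have ab: "(Some a, Some b) \<in> T" "inverse_edge ?G (Some a, Some b)"
    and cb: "(Some c, Some b) \<in> T" "inverse_edge ?G (Some c, Some b)"
    using assms(5,6,8,9) p by auto
  have fin: "finite ?G" "finite S"
    using finite_large_tilt[OF B] B SV by (auto simp: board_def intro: finite_subset)
  have "(c, a) \<notin> ?G"
    using min_arborescence_no_inverse_sibling[OF M large_tilt_subset sinks_subset_large_verts fin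
        ab(1) cb \<open>a \<noteq> c\<close>] .
  then have "b \<in> S"
    using large_tilt_inverse_pair_cases[OF B ab(2) cb(2) \<open>a \<noteq> c\<close>]
      large_tilt_inverse_row_and_col_ends_sink[OF B SV M _ _ _ _ ab cb]
      large_tilt_inverse_row_and_col_ends_sink[OF B SV M _ _ _ _ cb ab]
    by blast
  then show ?thesis
    using p by simp
qed
end
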